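(* Let $d\in\{1,2\}$ and $N\ge1$. Then $$E_Q(K(N)^2)=\sum_{n=0}^N\ \sum_{1\le i_1<\cdots<i_n\le N}c^{2n}_{N,d}\sum_{x_1,\dots,x_n\in\mathbb{Z}^d}\ \prod_{k=1}^n p_0^2(i_k-i_{k-1},x_k-x_{k-1})\left(\sum_{x\in\mathbb{Z}^d}|x|^2p_0(N-i_n,x-x_n)\right)^2,$$ with the conventions $i_0=0$, $x_0=0$.
   Context: $P^N_0$ is the uniform probability measure on nearest-neighbour walks $\omega:\{0,\dots,N\}\to\mathbb{Z}^d$ with $\omega(0)=0$, $|\omega(n)-\omega(n-1)|=1$; $p_0(n,x)$ is the probability that simple random walk on $\mathbb{Z}^d$ started at $0$ is at $x$ at time $n$. The environment $h=\{h(n,x)\}$ is i.i.d. with $h(n,x)=\pm1$ each with probability $1/2$ on $(H,\mathcal{G},Q)$, independent of the walk; $E_Q$ is expectation under $Q$. $c_{N,d}>0$ are the scaling constants (with $\lim c_{N,1}^2N^{1/2}=0$ for $d=1$, $\lim c_{N,2}^2\log N=0$ for $d=2$). $K(N)=\int\prod_{n=1}^N[1+c_{N,d}h(n,\omega(n))]\,|\omega(N)|^2\,dP^N_0(\omega)$. *)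

theory Defs
  imports "HOL-Probability.Probability"
begin

text \<open>Points of Z^d are modelled as int ^ 'd, with d = CARD('d).\<close>

definition sqnorm :: "int ^ 'd \<Rightarrow> real" where
  "sqnorm x = (\<Sum>j\<in>UNIV. real_of_int ((x $ j)^2))"

text \<open>Nearest-neighbour walks of length N started at 0, as functions on nat
  that are frozen at 0 after time N (so the set is finite).\<close>
definition walks :: "nat \<Rightarrow> (nat \<Rightarrow> int ^ 'd) set" where
  "walks N = {\<omega>. \<omega> 0 = 0 \<and> (\<forall>n\<in>{1..N}. sqnorm (\<omega> n - \<omega> (n - 1)) = 1)
                  \<and> (\<forall>n>N. \<omega> n = 0)}"

definition P0 :: "nat \<Rightarrow> (nat \<Rightarrow> int ^ 'd) pmf" where
  "P0 N = pmf_of_set (walks N)"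

definition p0 :: "nat \<Rightarrow> int ^ 'd \<Rightarrow> real" where
  "p0 n x = measure_pmf.prob (P0 n) {\<omega>. \<omega> n = x}"

definition Q :: "(nat \<times> (int ^ 'd) \<Rightarrow> real) measure" where
  "Q = PiM UNIV (\<lambda>_. measure_pmf (pmf_of_set {-1, 1}))"

definition K :: "real \<Rightarrow> nat \<Rightarrow> (nat \<times> (int ^ 'd) \<Rightarrow> real) \<Rightarrow> real" where
  "K cN N h = measure_pmf.expectation (P0 N)
      (\<lambda>\<omega>. (\<Prod>n=1..N. 1 + cN * h (n, \<omega> n)) * sqnorm (\<omega> N))"

definition incr_seqs :: "nat \<Rightarrow> nat \<Rightarrow> (nat \<Rightarrow> nat) set" where
  "incr_seqs N n = {i. i 0 = 0 \<and> (\<forall>k\<in>{1..n}. i (k - 1) < i k) \<and> i n \<le> N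
                      \<and> (\<forall>k>n. i k = 0)}"

definition pt_seqs :: "nat \<Rightarrow> (nat \<Rightarrow> int ^ 'd) set" where
  "pt_seqs n = {x. x 0 = 0 \<and> (\<forall>k>n. x k = 0)}"

end

theory Submission
  imports Defs
begin

text \<open>Write K(N)^2 as a double sum over pairs of walks (\<omega>, \<omega>') and integrate out the
  independent environment coordinate by coordinate: a pair contributes
  prod_n (1 + c^2 [\<omega> n = \<omega>' n]), which is the sum over A \<subseteq> {1..N} of c^(2|A|) [\<omega> = \<omega>' on A].
  For A = {i_1 < ... < i_n}, the average over pairs agreeing on A splits according to the common
  positions x_k = \<omega>(i_k), and by the Markov property of the walk each term factorises into the
  squared transition probabilities between consecutive meeting points and the square of the mean
  of |\<omega> N|^2 after the last meeting.\<close>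

type_synonym 'd path = "nat \<Rightarrow> int ^ 'd"

definition walk_append :: "nat \<Rightarrow> nat \<Rightarrow> (nat \<Rightarrow> 'a::ab_group_add) \<Rightarrow> (nat \<Rightarrow> 'a) \<Rightarrow> nat \<Rightarrow> 'a" where
  "walk_append a b \<omega> \<eta> k = (if k \<le> a then \<omega> k else if k \<le> a + b then \<omega> a + \<eta> (k - a) else 0)"

definition walk_prefix :: "nat \<Rightarrow> (nat \<Rightarrow> 'a::zero) \<Rightarrow> nat \<Rightarrow> 'a" where
  "walk_prefix a \<omega> k = (if k \<le> a then \<omega> k else 0)"

definition walk_suffix :: "nat \<Rightarrow> nat \<Rightarrow> (nat \<Rightarrow> 'a::ab_group_add) \<Rightarrow> nat \<Rightarrow> 'a" where
  "walk_suffix a b \<omega> k = (if k \<le> b then \<omega> (a + k) - \<omega> a else 0)"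

lemma walk_append_in_walks:
  assumes \<omega>: "\<omega> \<in> walks a" and \<eta>: "\<eta> \<in> walks b"
  shows "walk_append a b \<omega> \<eta> \<in> walks (a + b)"
proof -
  have "sqnorm (walk_append a b \<omega> \<eta> n - walk_append a b \<omega> \<eta> (n - 1)) = 1"
    if n: "n \<in> {1..a + b}" for n
  proof (cases "n \<le> a")
    case True
    then show ?thesis using \<omega> n by (simp add: walks_def walk_append_def)
  next
    case False
    then have "n - a \<in> {1..b}"
      using n by auto
    then have "sqnorm (\<eta> (n - a) - \<eta> (n - a - 1)) = 1"
      using \<eta> unfolding walks_def by blast
    moreover have "walk_append a b \<omega> \<eta> n - walk_append a b \<omega> \<eta> (n - 1) = \<eta> (n - a) - \<eta> (n - a - 1)"
      using n \<eta> False by (cases "n = Suc a") (auto simp: walks_def walk_append_def)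
    ultimately show ?thesis by simp
  qed
  then show ?thesis using \<omega> by (auto simp: walks_def walk_append_def)
qed

lemma walk_prefix_in_walks: "\<omega> \<in> walks (a + b) \<Longrightarrow> walk_prefix a \<omega> \<in> walks a"
  by (auto simp: walks_def walk_prefix_def)

lemma walk_suffix_in_walks:
  assumes "\<omega> \<in> walks (a + b)"
  shows "walk_suffix a b \<omega> \<in> walks b"
proof -
  have "walk_suffix a b \<omega> n - walk_suffix a b \<omega> (n - 1) = \<omega> (a + n) - \<omega> (a + n - 1)"
    if "n \<in> {1..b}" for n
    using that by (auto simp: walk_suffix_def)
  then show ?thesis using assms by (auto simp: walks_def walk_suffix_def)
qed

lemma walk_prefix_walk_append: "\<omega> \<in> walks a \<Longrightarrow> walk_prefix a (walk_append a b \<omega> \<eta>) = \<omega>"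
  by (auto simp: fun_eq_iff walks_def walk_prefix_def walk_append_def)

lemma walk_suffix_walk_append: "\<eta> \<in> walks b \<Longrightarrow> walk_suffix a b (walk_append a b \<omega> \<eta>) = \<eta>"
  by (auto simp: fun_eq_iff walks_def walk_suffix_def walk_append_def)

lemma walk_append_prefix_suffix:
  "\<omega> \<in> walks (a + b) \<Longrightarrow> walk_append a b (walk_prefix a \<omega>) (walk_suffix a b \<omega>) = \<omega>"
  by (auto simp: fun_eq_iff walks_def walk_prefix_def walk_suffix_def walk_append_def)

lemma walk_append_end: "\<eta> \<in> walks b \<Longrightarrow> walk_append a b \<omega> \<eta> (a + b) = \<omega> a + \<eta> b"
  by (cases "b = 0") (auto simp: walks_def walk_append_def)

lemma bij_betw_walk_append:
  "bij_betw (\<lambda>(\<omega>, \<eta>). walk_append a b \<omega> \<eta>) (walks a \<times> walks b) (walks (a + b) :: 'd::finite path set)"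
  by (rule bij_betw_byWitness[where f' = "\<lambda>\<omega>. (walk_prefix a \<omega>, walk_suffix a b \<omega>)"])
    (auto simp: walk_prefix_walk_append walk_suffix_walk_append walk_append_prefix_suffix
      walk_append_in_walks walk_prefix_in_walks walk_suffix_in_walks)

lemma sum_walks_add:
  fixes F :: "'d::finite path \<Rightarrow> 'b::comm_semiring_1" and G :: "int ^ 'd \<Rightarrow> 'b"
  shows "(\<Sum>\<omega>\<in>walks (a + b). F (walk_prefix a \<omega>) * G (\<omega> (a + b))) =
         (\<Sum>\<omega>\<in>walks a. F \<omega> * (\<Sum>\<eta>\<in>walks b. G (\<omega> a + \<eta> b)))"
proof -
  have "(\<Sum>\<omega>\<in>walks (a + b). F (walk_prefix a \<omega>) * G (\<omega> (a + b))) =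
        (\<Sum>(\<omega>, \<eta>)\<in>walks a \<times> walks b. F \<omega> * G (\<omega> a + \<eta> b))"
    by (subst sum.reindex_bij_betw[OF bij_betw_walk_append, symmetric])
      (auto intro!: sum.cong simp: walk_prefix_walk_append walk_append_end)
  then show ?thesis
    by (simp add: sum.cartesian_product sum_distrib_left)
qed

lemma card_walks_add:
  "card (walks (a + b) :: 'd::finite path set) = card (walks a :: 'd path set) * card (walks b :: 'd path set)"
  by (metis bij_betw_same_card bij_betw_walk_append card_cartesian_product)

lemma finite_vec_components:
  assumes "finite S"
  shows "finite {v :: 'a ^ 'n. \<forall>j. v $ j \<in> S}"
proof -
  have "{v :: 'a ^ 'n. \<forall>j. v $ j \<in> S} = vec_nth -` (UNIV \<rightarrow>\<^sub>E S)"
    by auto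
  then show ?thesis
    using assms by (auto intro!: finite_vimageI finite_PiE simp: inj_def vec_eq_iff)
qed

lemma sqnorm_eq_1_component:
  assumes "sqnorm (v :: int ^ 'd) = 1"
  shows "v $ j \<in> {-1, 0, 1}"
proof -
  have "real_of_int ((v $ j)^2) \<le> sqnorm v"
    unfolding sqnorm_def by (rule member_le_sum) auto
  then have "\<bar>v $ j\<bar> \<le> 1"
    using assms by (simp add: abs_square_le_1)
  then show ?thesis by auto
qed

lemma sqnorm_axis: "sqnorm (axis j 1 :: int ^ 'd) = 1"
  unfolding sqnorm_def axis_def by (simp add: if_distrib[of "\<lambda>t. (real_of_int t)\<^sup>2"] cong: if_cong)

lemma walks_1: "walks 1 = (\<lambda>v k. if k = 1 then v else 0) ` {v :: int ^ 'd. sqnorm v = 1}"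
proof (intro subset_antisym subsetI)
  fix \<omega> :: "'d path"
  assume \<omega>: "\<omega> \<in> walks 1"
  have "\<omega> = (\<lambda>k. if k = 1 then \<omega> 1 else 0)"
  proof
    fix k
    show "\<omega> k = (if k = 1 then \<omega> 1 else 0)"
      using \<omega> by (cases "k = 0 \<or> k = 1") (auto simp: walks_def)
  qed
  moreover have "sqnorm (\<omega> 1) = 1"
    using \<omega> by (auto simp: walks_def)
  ultimately show "\<omega> \<in> (\<lambda>v k. if k = 1 then v else 0) ` {v. sqnorm v = 1}"
    by blast
qed (auto simp: walks_def)

lemma finite_walks: "finite (walks m :: 'd::finite path set)"
proof (induction m)
  case 0
  have "walks 0 = ({\<lambda>_. 0} :: 'd path set)"
    by (auto simp: walks_def fun_eq_iff) (metis neq0_conv)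
  then show ?case by simp
next
  case (Suc m)
  have "finite {v :: int ^ 'd. sqnorm v = 1}"
    by (rule finite_subset[OF _ finite_vec_components[of "{-1, 0, 1}"]])
      (auto dest: sqnorm_eq_1_component)
  then have "finite (walks 1 :: 'd path set)"
    unfolding walks_1 by simp
  with Suc have "finite ((\<lambda>(\<omega>, \<eta>). walk_append m 1 \<omega> \<eta>) ` (walks m \<times> walks 1 :: ('d path \<times> 'd path) set))"
    by simp
  then show ?case
    using bij_betw_walk_append[of m 1, where 'd = 'd] by (simp add: bij_betw_def)
qed

lemma walks_nonempty: "walks m \<noteq> ({} :: 'd::finite path set)"
proof (induction m)
  case 0
  have "(\<lambda>_. 0) \<in> (walks 0 :: 'd path set)"
    by (simp add: walks_def)
  then show ?case by blast
next
  case (Suc m)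
  have "(\<lambda>k. if k = 1 then axis undefined 1 else 0) \<in> (walks 1 :: 'd path set)"
    unfolding walks_1 using sqnorm_axis by blast
  with Suc show ?case
    using bij_betw_walk_append[of m 1, where 'd = 'd] by (auto simp: bij_betw_def)
qed

definition walk_count :: "nat \<Rightarrow> int ^ 'd \<Rightarrow> real" where
  "walk_count m z = (\<Sum>\<eta>\<in>walks m. of_bool (\<eta> m = z))"

lemma p0_eq_walk_count: "p0 m (z :: int ^ 'd::finite) = walk_count m z / real (card (walks m :: 'd path set))"
proof -
  have "p0 m z = real (card (walks m \<inter> {\<omega>. \<omega> m = z})) / real (card (walks m :: 'd path set))"
    unfolding p0_def P0_def by (simp add: measure_pmf_of_set finite_walks walks_nonempty)
  moreover have "walk_count m z = real (card (walks m \<inter> {\<omega>. \<omega> m = z}))"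
    unfolding walk_count_def using finite_walks[of m, where 'd = 'd] by (simp add: Int_def)
  ultimately show ?thesis by simp
qed

lemma infsum_p0_shift:
  fixes f :: "int ^ 'd::finite \<Rightarrow> real"
  shows "(\<Sum>\<^sub>\<infinity>y. f y * p0 m (y - a)) = (\<Sum>\<eta>\<in>walks m. f (a + \<eta> m)) / real (card (walks m :: 'd path set))"
proof -
  define W where "W = (walks m :: 'd path set)"
  define Y where "Y = (\<lambda>\<eta>. a + \<eta> m) ` W"
  have "finite W" unfolding W_def by (rule finite_walks)
  then have fin: "finite Y" unfolding Y_def by simp
  have summand: "f y * p0 m (y - a) = (\<Sum>\<eta>\<in>W. (if a + \<eta> m = y then f y else 0)) / real (card W)" for y
    unfolding p0_eq_walk_count walk_count_def W_def
    by (simp add: sum_distrib_left eq_diff_eq add.commute of_bool_def if_distrib[of "\<lambda>t. f y * t"]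
        cong: if_cong)
  have "(\<Sum>\<^sub>\<infinity>y. f y * p0 m (y - a)) = (\<Sum>y\<in>Y. f y * p0 m (y - a))"
    using fin by (subst infsum_cong_neutral[where T = Y]) (auto simp: summand Y_def intro!: sum.neutral)
  also have "\<dots> = (\<Sum>\<eta>\<in>W. \<Sum>y\<in>Y. (if a + \<eta> m = y then f y else 0)) / real (card W)"
    unfolding summand by (simp add: sum_divide_distrib sum.swap[of _ Y])
  also have "\<dots> = (\<Sum>\<eta>\<in>W. f (a + \<eta> m)) / real (card W)"
    using fin by (simp add: Y_def sum.delta')
  finally show ?thesis unfolding W_def .
qed

lemma less_of_stepwise_less:
  fixes i :: "nat \<Rightarrow> 'a::order"
  assumes "\<forall>k\<in>{1..n}. i (k - 1) < i k" "j < k" "k \<le> n"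
  shows "i j < i k"
proof (rule lift_Suc_mono_less_ivl[where N = "{..<n}"])
  show "i m < i (Suc m)" if "m \<in> {..<n}" for m
    using bspec[OF assms(1), of "Suc m"] that by simp
qed (use assms in auto)

lemma card_walks_split:
  fixes i :: "nat \<Rightarrow> nat"
  assumes "i 0 = 0" "\<forall>k\<in>{1..n}. i (k - 1) < i k" "i n \<le> M"
  shows "real (card (walks M :: 'd::finite path set)) =
    (\<Prod>k=1..n. real (card (walks (i k - i (k - 1)) :: 'd path set))) * real (card (walks (M - i n) :: 'd path set))"
  using assms(2,3)
proof (induction n arbitrary: M)
  case 0
  then show ?case using assms(1) by simp
next
  case (Suc n)
  have "i n < i (Suc n)"
    using Suc.prems(1) by force
  then have "real (card (walks (i (Suc n)) :: 'd path set)) =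
    (\<Prod>k=1..n. real (card (walks (i k - i (k - 1)) :: 'd path set))) * real (card (walks (i (Suc n) - i n) :: 'd path set))"
    using Suc.IH[of "i (Suc n)"] Suc.prems(1) by simp
  moreover have "real (card (walks M :: 'd path set)) =
    real (card (walks (i (Suc n)) :: 'd path set)) * real (card (walks (M - i (Suc n)) :: 'd path set))"
    using card_walks_add[of "i (Suc n)" "M - i (Suc n)", where 'd = 'd] Suc.prems(2) by simp
  ultimately show ?case
    by (simp add: prod.cl_ivl_Suc)
qed

lemma sum_walks_through_points:
  fixes i :: "nat \<Rightarrow> nat" and x :: "'d::finite path" and \<phi> :: "int ^ 'd \<Rightarrow> real"
  assumes "i 0 = 0" "x 0 = 0" "\<forall>k\<in>{1..n}. i (k - 1) < i k" "i n \<le> M"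
  shows "(\<Sum>\<omega>\<in>walks M. of_bool (\<forall>k\<in>{1..n}. \<omega> (i k) = x k) * \<phi> (\<omega> M)) =
    (\<Prod>k=1..n. walk_count (i k - i (k - 1)) (x k - x (k - 1))) * (\<Sum>\<eta>\<in>walks (M - i n). \<phi> (x n + \<eta> (M - i n)))"
  using assms(3,4)
proof (induction n arbitrary: M \<phi>)
  case 0
  then show ?case using assms(1,2) by simp
next
  case (Suc n)
  define m where "m = i (Suc n)"
  define S where "S = (\<lambda>z. \<Sum>\<eta>\<in>walks (M - m). \<phi> (z + \<eta> (M - m)))"
  have before_m: "i k \<le> m" if "k \<le> Suc n" for k
    using less_of_stepwise_less[OF Suc.prems(1), of k "Suc n"] that by (cases "k = Suc n") (auto simp: m_def)
  have "(\<Sum>\<omega>\<in>walks M. of_bool (\<forall>k\<in>{1..Suc n}. \<omega> (i k) = x k) * \<phi> (\<omega> M)) =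
        (\<Sum>\<omega>\<in>walks (m + (M - m)). of_bool (\<forall>k\<in>{1..Suc n}. walk_prefix m \<omega> (i k) = x k) * \<phi> (\<omega> (m + (M - m))))"
    using Suc.prems(2) before_m by (simp add: m_def walk_prefix_def)
  also have "\<dots> = (\<Sum>\<omega>\<in>walks m. of_bool (\<forall>k\<in>{1..Suc n}. \<omega> (i k) = x k) * S (\<omega> m))"
    unfolding S_def by (rule sum_walks_add)
  also have "\<dots> = (\<Sum>\<omega>\<in>walks m. of_bool (\<forall>k\<in>{1..n}. \<omega> (i k) = x k) * (of_bool (\<omega> m = x (Suc n)) * S (x (Suc n))))"
    by (rule sum.cong) (auto simp: m_def atLeastAtMostSuc_conv)
  also have "\<dots> = (\<Prod>k=1..n. walk_count (i k - i (k - 1)) (x k - x (k - 1))) *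
      (\<Sum>\<eta>\<in>walks (m - i n). of_bool (x n + \<eta> (m - i n) = x (Suc n)) * S (x (Suc n)))"
    using Suc.IH[of m] Suc.prems(1) before_m[of n] by simp
  also have "(\<Sum>\<eta>\<in>walks (m - i n). of_bool (x n + \<eta> (m - i n) = x (Suc n)) * S (x (Suc n))) =
      walk_count (i (Suc n) - i n) (x (Suc n) - x n) * S (x (Suc n))"
    unfolding walk_count_def m_def by (simp add: sum_distrib_right eq_diff_eq add.commute)
  finally show ?case
    by (simp add: S_def m_def prod.cl_ivl_Suc mult_ac)
qed

lemma (in product_prob_space) integrable_prod_coordinates:
  fixes f :: "'i \<Rightarrow> 'a \<Rightarrow> 'b::{real_normed_field,banach,second_countable_topology}"
  assumes "finite J" "J \<subseteq> I" "\<And>j. j \<in> J \<Longrightarrow> integrable (M j) (f j)"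
  shows "integrable (PiM I M) (\<lambda>x. \<Prod>j\<in>J. f j (x j))"
    and "(\<integral>x. (\<Prod>j\<in>J. f j (x j)) \<partial>PiM I M) = (\<Prod>j\<in>J. integral\<^sup>L (M j) (f j))"
proof -
  have restrict: "(\<lambda>x. restrict x J) \<in> PiM I M \<rightarrow>\<^sub>M PiM J M"
    using assms(2) by (rule measurable_restrict_subset)
  have int_J: "integrable (PiM J M) (\<lambda>x. \<Prod>j\<in>J. f j (x j))"
    using assms(1,3) by (rule product_integrable_prod)
  have distr: "distr (PiM I M) (PiM J M) (\<lambda>x. restrict x J) = PiM J M"
    using assms(1,2) by (rule distr_PiM_restrict_finite)
  have prod_restrict: "(\<Prod>j\<in>J. f j (restrict x J j)) = (\<Prod>j\<in>J. f j (x j))" for x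
    by simp
  show "integrable (PiM I M) (\<lambda>x. \<Prod>j\<in>J. f j (x j))"
    using int_J integrable_distr_eq[OF restrict, of "\<lambda>x. \<Prod>j\<in>J. f j (x j)"]
    unfolding distr prod_restrict by (simp add: borel_measurable_integrable)
  show "(\<integral>x. (\<Prod>j\<in>J. f j (x j)) \<partial>PiM I M) = (\<Prod>j\<in>J. integral\<^sup>L (M j) (f j))"
    using integral_distr[OF restrict, of "\<lambda>x. \<Prod>j\<in>J. f j (x j)"] int_J
      product_integral_prod[OF assms(1,3)]
    unfolding distr prod_restrict by (simp add: borel_measurable_integrable)
qed

definition walk_graph :: "nat \<Rightarrow> (nat \<Rightarrow> 'a) \<Rightarrow> (nat \<times> 'a) set" where
  "walk_graph N \<omega> = (\<lambda>n. (n, \<omega> n)) ` {1..N}"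

lemma prod_walk_graph: "(\<Prod>n=1..N. F (n, \<omega> n)) = (\<Prod>j\<in>walk_graph N \<omega>. F j)"
  unfolding walk_graph_def by (subst prod.reindex) (auto simp: inj_on_def)

lemma finite_walk_graph: "finite (walk_graph N \<omega>)"
  by (simp add: walk_graph_def)

lemma Q_pair_moment:
  fixes \<omega> \<omega>' :: "'d::finite path" and c :: real and N :: nat
  defines "A h \<equiv> (\<Prod>n=1..N. 1 + c * h (n, \<omega> n)) * (\<Prod>n=1..N. 1 + c * h (n, \<omega>' n))"
  shows "integrable Q A"
    and "integral\<^sup>L Q A = (\<Prod>n=1..N. if \<omega> n = \<omega>' n then 1 + c\<^sup>2 else 1)"
proof -
  define G where "G = walk_graph N \<omega>"
  define G' where "G' = walk_graph N \<omega>'"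
  define g where "g j t = (if j \<in> G then 1 + c * t else 1) * (if j \<in> G' then 1 + c * t else 1)" for j t
  let ?\<nu> = "measure_pmf (pmf_of_set {-1, 1::real})"
  interpret product_prob_space "\<lambda>_. ?\<nu>" UNIV
    by (rule product_prob_spaceI) (rule measure_pmf.prob_space_axioms)
  have fin: "finite (G \<union> G')"
    by (simp add: G_def G'_def finite_walk_graph)
  have int: "integrable ?\<nu> (g j)" for j
    by (rule integrable_measure_pmf_finite) simp
  have "A h = (\<Prod>j\<in>G \<union> G'. g j (h j))" for h
  proof -
    have "(\<Prod>n=1..N. 1 + c * h (n, \<eta> n)) = (\<Prod>j\<in>G \<union> G'. if j \<in> walk_graph N \<eta> then 1 + c * h j else 1)"
      if "walk_graph N \<eta> \<subseteq> G \<union> G'" for \<eta>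
    proof -
      have "(\<Prod>n=1..N. 1 + c * h (n, \<eta> n)) = (\<Prod>j\<in>walk_graph N \<eta>. 1 + c * h j)"
        by (rule prod_walk_graph)
      also have "\<dots> = (\<Prod>j\<in>(G \<union> G') \<inter> walk_graph N \<eta>. 1 + c * h j)"
        using that by (simp add: Int_absorb1)
      finally show ?thesis
        by (simp add: prod.inter_restrict[OF fin])
    qed
    then show ?thesis
      unfolding A_def g_def prod.distrib by (simp add: G_def G'_def)
  qed
  then have A: "A = (\<lambda>h. \<Prod>j\<in>G \<union> G'. g j (h j))" ..
  show "integrable Q A"
    unfolding A Q_def using fin by (auto intro: integrable_prod_coordinates int)
  have mean: "integral\<^sup>L ?\<nu> (g j) = (if j \<in> G \<inter> G' then 1 + c\<^sup>2 else 1)" for j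
    by (simp add: integral_pmf_of_set g_def power2_eq_square algebra_simps)
  have "integral\<^sup>L Q A = (\<Prod>j\<in>G \<union> G'. if j \<in> G \<inter> G' then 1 + c\<^sup>2 else 1)"
    unfolding A Q_def using fin by (simp add: integrable_prod_coordinates int mean)
  also have "\<dots> = (\<Prod>j\<in>G. if j \<in> G' then 1 + c\<^sup>2 else 1)"
    by (rule prod.mono_neutral_cong_right) (use fin in auto)
  also have "\<dots> = (\<Prod>n=1..N. if \<omega> n = \<omega>' n then 1 + c\<^sup>2 else 1)"
    unfolding G_def G'_def prod_walk_graph[symmetric] by (intro prod.cong refl) (auto simp: walk_graph_def)
  finally show "integral\<^sup>L Q A = (\<Prod>n=1..N. if \<omega> n = \<omega>' n then 1 + c\<^sup>2 else 1)" .
qed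

lemma K_eq_sum:
  fixes h :: "nat \<times> (int ^ 'd::finite) \<Rightarrow> real"
  shows "K c N h = (\<Sum>\<omega>\<in>walks N. (\<Prod>n=1..N. 1 + c * h (n, \<omega> n)) * sqnorm (\<omega> N)) / real (card (walks N :: 'd path set))"
  unfolding K_def P0_def by (simp add: integral_pmf_of_set finite_walks walks_nonempty)

lemma prod_if_add_one_eq_sum_Pow:
  fixes a :: "'a::comm_semiring_1"
  assumes "finite S"
  shows "(\<Prod>n\<in>S. if P n then 1 + a else 1) = (\<Sum>A\<in>Pow S. a ^ card A * of_bool (\<forall>n\<in>A. P n))"
proof -
  have "(\<Prod>n\<in>S. if P n then 1 + a else 1) = (\<Prod>n\<in>S. (if P n then a else 0) + 1)"
    by (rule prod.cong) (auto simp: add.commute)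
  also have "\<dots> = (\<Sum>A\<in>Pow S. (\<Prod>n\<in>A. if P n then a else 0))"
    using prod_add[OF assms, of "\<lambda>n. if P n then a else 0" "\<lambda>_. 1"] by simp
  also have "\<dots> = (\<Sum>A\<in>Pow S. a ^ card A * of_bool (\<forall>n\<in>A. P n))"
    by (rule sum.cong) (auto intro!: prod_zero dest: finite_subset[OF _ assms])
  finally show ?thesis .
qed

definition agreement_moment :: "'d::finite path set \<Rightarrow> nat \<Rightarrow> nat set \<Rightarrow> real" where
  "agreement_moment W N A =
    (\<Sum>\<omega>\<in>W. \<Sum>\<omega>'\<in>W. of_bool (\<forall>n\<in>A. \<omega> n = \<omega>' n) * (sqnorm (\<omega> N) * sqnorm (\<omega>' N))) / (real (card W))\<^sup>2"

lemma integral_Q_K_squared: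
  "(\<integral>h. (K c N h)\<^sup>2 \<partial>(Q :: (nat \<times> (int ^ 'd::finite) \<Rightarrow> real) measure)) =
    (\<Sum>A\<in>Pow {1..N}. c ^ (2 * card A) * agreement_moment (walks N :: 'd path set) N A)"
proof -
  define W where "W = (walks N :: 'd path set)"
  define A where "A \<omega> h = (\<Prod>n=1..N. 1 + c * h (n, \<omega> n))" for \<omega> :: "'d path" and h :: "nat \<times> (int ^ 'd) \<Rightarrow> real"
  define s where "s \<omega> \<omega>' = sqnorm (\<omega> N) * sqnorm (\<omega>' N) / (real (card W))\<^sup>2" for \<omega> \<omega>' :: "'d path"
  have K_squared: "(K c N h)\<^sup>2 = (\<Sum>\<omega>\<in>W. \<Sum>\<omega>'\<in>W. A \<omega> h * A \<omega>' h * s \<omega> \<omega>')" for h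
    unfolding K_eq_sum power2_eq_square W_def A_def s_def
    by (simp add: sum_product sum_divide_distrib algebra_simps)
  have "(\<integral>h. (K c N h)\<^sup>2 \<partial>(Q :: (nat \<times> (int ^ 'd) \<Rightarrow> real) measure)) = (\<integral>h. (\<Sum>\<omega>\<in>W. \<Sum>\<omega>'\<in>W. A \<omega> h * A \<omega>' h * s \<omega> \<omega>') \<partial>Q)"
    by (simp only: K_squared)
  also have "\<dots> = (\<Sum>\<omega>\<in>W. \<Sum>\<omega>'\<in>W. (\<integral>h. A \<omega> h * A \<omega>' h \<partial>Q) * s \<omega> \<omega>')"
  proof -
    have "integrable Q (\<lambda>h. A \<omega> h * A \<omega>' h)" for \<omega> \<omega>'
      unfolding A_def by (rule Q_pair_moment(1))
    then show ?thesis by (simp add: integrable_sum integral_sum)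
  qed
  also have "\<dots> = (\<Sum>\<omega>\<in>W. \<Sum>\<omega>'\<in>W. (\<Sum>B\<in>Pow {1..N}. (c\<^sup>2) ^ card B * of_bool (\<forall>n\<in>B. \<omega> n = \<omega>' n)) * s \<omega> \<omega>')"
  proof -
    have "(\<integral>h. A \<omega> h * A \<omega>' h \<partial>Q) = (\<Sum>B\<in>Pow {1..N}. (c\<^sup>2) ^ card B * of_bool (\<forall>n\<in>B. \<omega> n = \<omega>' n))"
      for \<omega> \<omega>'
      unfolding A_def Q_pair_moment(2) by (rule prod_if_add_one_eq_sum_Pow) simp
    then show ?thesis by (simp only:)
  qed
  also have "\<dots> = (\<Sum>B\<in>Pow {1..N}. (c\<^sup>2) ^ card B *
      (\<Sum>\<omega>\<in>W. \<Sum>\<omega>'\<in>W. of_bool (\<forall>n\<in>B. \<omega> n = \<omega>' n) * s \<omega> \<omega>'))"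
    by (simp add: sum_distrib_left sum_distrib_right sum.swap[where A = "Pow _"] mult_ac
        del: sum_mult_of_bool_eq sum_of_bool_mult_eq)
  also have "\<dots> = (\<Sum>B\<in>Pow {1..N}. c ^ (2 * card B) * agreement_moment W N B)"
    unfolding agreement_moment_def s_def
    by (simp add: sum_divide_distrib power_mult del: sum_mult_of_bool_eq sum_of_bool_mult_eq)
  finally show ?thesis unfolding W_def .
qed

lemma pinned_term_eq:
  fixes i :: "nat \<Rightarrow> nat" and x :: "'d::finite path"
  assumes i: "i \<in> incr_seqs N n" and x: "x \<in> pt_seqs n"
  shows "(\<Prod>k=1..n. (p0 (i k - i (k - 1)) (x k - x (k - 1)))\<^sup>2) *
      (\<Sum>\<^sub>\<infinity>y. sqnorm y * p0 (N - i n) (y - x n))\<^sup>2 =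
    ((\<Sum>\<omega>\<in>walks N. of_bool (\<forall>k\<in>{1..n}. \<omega> (i k) = x k) * sqnorm (\<omega> N)) / real (card (walks N :: 'd path set)))\<^sup>2"
proof -
  have i_props: "i 0 = 0" "\<forall>k\<in>{1..n}. i (k - 1) < i k" "i n \<le> N"
    using i by (auto simp: incr_seqs_def)
  have "x 0 = 0"
    using x by (simp add: pt_seqs_def)
  have through: "(\<Sum>\<omega>\<in>walks N. of_bool (\<forall>k\<in>{1..n}. \<omega> (i k) = x k) * sqnorm (\<omega> N)) =
    (\<Prod>k=1..n. walk_count (i k - i (k - 1)) (x k - x (k - 1))) * (\<Sum>\<eta>\<in>walks (N - i n). sqnorm (x n + \<eta> (N - i n)))"
    using i_props \<open>x 0 = 0\<close> by (intro sum_walks_through_points) auto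
  have "(\<Sum>\<omega>\<in>walks N. of_bool (\<forall>k\<in>{1..n}. \<omega> (i k) = x k) * sqnorm (\<omega> N)) / real (card (walks N :: 'd path set)) =
    (\<Prod>k=1..n. p0 (i k - i (k - 1)) (x k - x (k - 1))) * (\<Sum>\<^sub>\<infinity>y. sqnorm y * p0 (N - i n) (y - x n))"
    unfolding infsum_p0_shift unfolding p0_eq_walk_count
    by (simp only: through card_walks_split[OF i_props] prod_dividef times_divide_times_eq)
  then show ?thesis
    by (simp add: power_mult_distrib prod_power_distrib)
qed

lemma sum_fibres_squared:
  fixes \<pi> :: "'a \<Rightarrow> 'b" and s :: "'a \<Rightarrow> 'c::comm_semiring_1"
  assumes "finite W"
  shows "(\<Sum>x\<in>\<pi> ` W. (\<Sum>\<omega>\<in>W. of_bool (\<pi> \<omega> = x) * s \<omega>)\<^sup>2) =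
    (\<Sum>\<omega>\<in>W. \<Sum>\<omega>'\<in>W. of_bool (\<pi> \<omega> = \<pi> \<omega>') * (s \<omega> * s \<omega>'))"
proof -
  have "(\<Sum>x\<in>\<pi> ` W. (\<Sum>\<omega>\<in>W. of_bool (\<pi> \<omega> = x) * s \<omega>)\<^sup>2) =
      (\<Sum>\<omega>\<in>W. \<Sum>\<omega>'\<in>W. \<Sum>x\<in>\<pi> ` W. of_bool (\<pi> \<omega> = x \<and> \<pi> \<omega>' = x) * (s \<omega> * s \<omega>'))"
    by (simp add: power2_eq_square sum_product sum.swap[where A = "\<pi> ` W"] of_bool_conj mult_ac
        del: sum_mult_of_bool_eq sum_of_bool_mult_eq)
  also have "\<dots> = (\<Sum>\<omega>\<in>W. \<Sum>\<omega>'\<in>W. of_bool (\<pi> \<omega> = \<pi> \<omega>') * (s \<omega> * s \<omega>'))"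
  proof (intro sum.cong refl)
    fix \<omega> \<omega>'
    assume "\<omega> \<in> W"
    have "(\<Sum>x\<in>\<pi> ` W. of_bool (\<pi> \<omega> = x \<and> \<pi> \<omega>' = x) * (s \<omega> * s \<omega>')) =
        (\<Sum>x\<in>\<pi> ` W. if x = \<pi> \<omega> then of_bool (\<pi> \<omega> = \<pi> \<omega>') * (s \<omega> * s \<omega>') else 0)"
      by (intro sum.cong) auto
    also have "\<dots> = of_bool (\<pi> \<omega> = \<pi> \<omega>') * (s \<omega> * s \<omega>')"
      using assms \<open>\<omega> \<in> W\<close> by (subst sum.delta) auto
    finally show "(\<Sum>x\<in>\<pi> ` W. of_bool (\<pi> \<omega> = x \<and> \<pi> \<omega>' = x) * (s \<omega> * s \<omega>')) =
        of_bool (\<pi> \<omega> = \<pi> \<omega>') * (s \<omega> * s \<omega>')" .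
  qed
  finally show ?thesis .
qed

lemma infsum_pinned_terms:
  fixes i :: "nat \<Rightarrow> nat"
  assumes i: "i \<in> incr_seqs N n"
  shows "(\<Sum>\<^sub>\<infinity>x\<in>(pt_seqs n :: 'd::finite path set).
      (\<Prod>k=1..n. (p0 (i k - i (k - 1)) (x k - x (k - 1)))\<^sup>2) *
      (\<Sum>\<^sub>\<infinity>y. sqnorm y * p0 (N - i n) (y - x n))\<^sup>2) =
    agreement_moment (walks N :: 'd path set) N (i ` {1..n})"
proof -
  define W where "W = (walks N :: 'd path set)"
  define \<pi> where "\<pi> \<omega> k = (if k \<in> {1..n} then \<omega> (i k) else 0)" for \<omega> :: "'d path" and k
  define f where "f x = ((\<Sum>\<omega>\<in>W. of_bool (\<pi> \<omega> = x) * sqnorm (\<omega> N)) / real (card W))\<^sup>2" for x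
  have "finite W"
    unfolding W_def by (rule finite_walks)
  have \<pi>_pt_seqs: "\<pi> \<omega> \<in> pt_seqs n" for \<omega>
    by (simp add: \<pi>_def pt_seqs_def)
  have \<pi>_eq_iff: "\<pi> \<omega> = x \<longleftrightarrow> (\<forall>k\<in>{1..n}. \<omega> (i k) = x k)" if "x \<in> pt_seqs n" for \<omega> x
    using that by (auto simp: \<pi>_def pt_seqs_def fun_eq_iff not_le)
  have "(\<Sum>\<^sub>\<infinity>x\<in>(pt_seqs n :: 'd path set).
      (\<Prod>k=1..n. (p0 (i k - i (k - 1)) (x k - x (k - 1)))\<^sup>2) *
      (\<Sum>\<^sub>\<infinity>y. sqnorm y * p0 (N - i n) (y - x n))\<^sup>2) = (\<Sum>\<^sub>\<infinity>x\<in>pt_seqs n. f x)"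
  proof (rule infsum_cong)
    fix x :: "'d path"
    assume x: "x \<in> pt_seqs n"
    show "(\<Prod>k=1..n. (p0 (i k - i (k - 1)) (x k - x (k - 1)))\<^sup>2) *
        (\<Sum>\<^sub>\<infinity>y. sqnorm y * p0 (N - i n) (y - x n))\<^sup>2 = f x"
      unfolding pinned_term_eq[OF i x] f_def W_def \<pi>_eq_iff[OF x] ..
  qed
  also have "\<dots> = (\<Sum>x\<in>\<pi> ` W. f x)"
  proof -
    have "f x = 0" if "x \<notin> \<pi> ` W" for x
      unfolding f_def using that by (auto intro!: sum.neutral)
    then show ?thesis
      using \<open>finite W\<close> \<pi>_pt_seqs by (subst infsum_cong_neutral[where T = "\<pi> ` W"]) auto
  qed
  also have "\<dots> = (\<Sum>\<omega>\<in>W. \<Sum>\<omega>'\<in>W. of_bool (\<pi> \<omega> = \<pi> \<omega>') * (sqnorm (\<omega> N) * sqnorm (\<omega>' N))) / (real (card W))\<^sup>2"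
    unfolding f_def power_divide sum_divide_distrib[symmetric] sum_fibres_squared[OF \<open>finite W\<close>] ..
  also have "\<dots> = agreement_moment W N (i ` {1..n})"
  proof -
    have "\<pi> \<omega> = \<pi> \<omega>' \<longleftrightarrow> (\<forall>a\<in>i ` {1..n}. \<omega> a = \<omega>' a)" for \<omega> \<omega>'
      by (auto simp: \<pi>_def fun_eq_iff)
    then show ?thesis
      by (simp only: agreement_moment_def)
  qed
  finally show ?thesis
    unfolding W_def .
qed

lemma incr_seqs_less:
  assumes "i \<in> incr_seqs N n" "j < k" "k \<le> n"
  shows "i j < i k"
  using assms by (intro less_of_stepwise_less[of n i]) (auto simp: incr_seqs_def)

lemma incr_seqs_image_subset:
  assumes "i \<in> incr_seqs N n"
  shows "i ` {1..n} \<subseteq> {1..N}"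
proof -
  have "i k \<in> {1..N}" if "k \<in> {1..n}" for k
    using incr_seqs_less[OF assms, of 0 k] incr_seqs_less[OF assms, of k n] assms that
    by (cases "k = n") (auto simp: incr_seqs_def)
  then show ?thesis by blast
qed

lemma sorted_list_of_set_incr_seqs_image:
  assumes "i \<in> incr_seqs N n"
  shows "sorted_list_of_set (i ` {1..n}) = map i [1..<Suc n]"
proof -
  let ?l = "map i [1..<Suc n]"
  have "sorted_wrt (<) ?l"
    unfolding sorted_wrt_iff_nth_less
    by (auto simp del: upt_Suc simp: nth_upt intro: incr_seqs_less[OF assms])
  then have "sorted ?l" "distinct ?l"
    by (simp_all add: strict_sorted_iff)
  moreover have "i ` {1..n} = set ?l"
    by auto
  ultimately show ?thesis
    by (simp only: sorted_list_of_set_sort_remdups distinct_remdups_id sorted_sort_id)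
qed

lemma card_incr_seqs_image:
  assumes "i \<in> incr_seqs N n"
  shows "card (i ` {1..n}) = n"
  using arg_cong[OF sorted_list_of_set_incr_seqs_image[OF assms], of length] by simp

definition enum_subset :: "nat \<Rightarrow> nat set \<Rightarrow> nat \<Rightarrow> nat" where
  "enum_subset n A k = (if k \<le> n then (0 # sorted_list_of_set A) ! k else 0)"

lemma enum_subset_incr_seqs_image:
  assumes "i \<in> incr_seqs N n"
  shows "enum_subset n (i ` {1..n}) = i"
proof
  fix k
  show "enum_subset n (i ` {1..n}) k = i k"
  proof (cases "k \<le> n")
    case True
    have "0 # map i [1..<Suc n] = map i [0..<Suc n]"
      using assms by (simp add: incr_seqs_def upt_conv_Cons del: upt_Suc)
    then show ?thesis
      using True unfolding enum_subset_def sorted_list_of_set_incr_seqs_image[OF assms]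
      by (simp del: upt_Suc)
  next
    case False
    then show ?thesis
      using assms by (simp add: enum_subset_def incr_seqs_def)
  qed
qed

lemma enum_subset_of_card_eq:
  assumes "A \<subseteq> {1..N}" "card A = n"
  shows "enum_subset n A \<in> incr_seqs N n" and "enum_subset n A ` {1..n} = A"
proof -
  define xs where "xs = sorted_list_of_set A"
  have "finite A"
    using assms(1) finite_subset by blast
  then have xs: "sorted_wrt (<) xs" "length xs = n" "set xs = A"
    using assms(2) by (auto simp: xs_def)
  have "sorted_wrt (<) (0 # xs)"
    using xs assms(1) by auto
  then have steps: "\<forall>k\<in>{1..n}. enum_subset n A (k - 1) < enum_subset n A k"
    using xs(2) unfolding enum_subset_def xs_def[symmetric] by (auto simp: sorted_wrt_iff_nth_less)
  have "enum_subset n A n \<le> N"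
  proof (cases n)
    case (Suc m)
    then have "xs ! m \<in> A"
      using nth_mem[of m xs] xs by simp
    then show ?thesis
      using Suc assms(1) by (auto simp: enum_subset_def xs_def)
  qed (simp add: enum_subset_def)
  with steps show "enum_subset n A \<in> incr_seqs N n"
    by (simp add: incr_seqs_def enum_subset_def)
  have "enum_subset n A ` {1..n} = (\<lambda>k. xs ! k) ` {..<n}"
    by (force simp: enum_subset_def xs_def[symmetric] image_iff Bex_def)
  then show "enum_subset n A ` {1..n} = A"
    using xs(2,3) by (auto simp: in_set_conv_nth)
qed

lemma bij_betw_incr_seqs_subsets:
  "bij_betw (\<lambda>i. i ` {1..n}) (incr_seqs N n) {A \<in> Pow {1..N}. card A = n}"
proof (rule bij_betw_byWitness[where f' = "enum_subset n"])
  show "\<forall>i\<in>incr_seqs N n. enum_subset n (i ` {1..n}) = i"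
    using enum_subset_incr_seqs_image by blast
  show "\<forall>A\<in>{A \<in> Pow {1..N}. card A = n}. enum_subset n A ` {1..n} = A"
    using enum_subset_of_card_eq(2) by blast
  show "(\<lambda>i. i ` {1..n}) ` incr_seqs N n \<subseteq> {A \<in> Pow {1..N}. card A = n}"
    using incr_seqs_image_subset card_incr_seqs_image by blast
  show "enum_subset n ` {A \<in> Pow {1..N}. card A = n} \<subseteq> incr_seqs N n"
    using enum_subset_of_card_eq(1) by blast
qed

theorem lemma3:
  fixes c :: "nat \<Rightarrow> real" and N :: nat
  assumes dim: "CARD('d) \<in> {1, 2}"
    and cpos: "\<And>M. c M > 0"
    and scal1: "CARD('d) = 1 \<Longrightarrow> (\<lambda>M. (c M)^2 * sqrt (real M)) \<longlonglongrightarrow> 0"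
    and scal2: "CARD('d) = 2 \<Longrightarrow> (\<lambda>M. (c M)^2 * ln (real M)) \<longlonglongrightarrow> 0"
    and N: "N \<ge> 1"
  shows "(\<integral>h. (K (c N) N h)^2 \<partial>(Q :: (nat \<times> (int ^ 'd) \<Rightarrow> real) measure)) =
    (\<Sum>n=0..N. \<Sum>i\<in>incr_seqs N n. (c N)^(2*n) *
       (\<Sum>\<^sub>\<infinity>x\<in>(pt_seqs n :: (nat \<Rightarrow> int ^ 'd) set).
          (\<Prod>k=1..n. (p0 (i k - i (k - 1)) (x k - x (k - 1)))^2) *
          (\<Sum>\<^sub>\<infinity>y\<in>UNIV. sqnorm y * p0 (N - i n) (y - x n))^2))"
    (is "_ = ?rhs")
  \<comment> \<open>The identity holds for every dimension and every c.\<close>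
proof -
  define G where "G A = c N ^ (2 * card A) * agreement_moment (walks N :: 'd path set) N A" for A
  have "?rhs = (\<Sum>n=0..N. \<Sum>i\<in>incr_seqs N n. G (i ` {1..n}))"
  proof (intro sum.cong refl)
    fix n i
    assume i: "i \<in> incr_seqs N n"
    show "(c N)^(2*n) *
       (\<Sum>\<^sub>\<infinity>x\<in>(pt_seqs n :: 'd path set).
          (\<Prod>k=1..n. (p0 (i k - i (k - 1)) (x k - x (k - 1)))^2) *
          (\<Sum>\<^sub>\<infinity>y\<in>UNIV. sqnorm y * p0 (N - i n) (y - x n))^2) = G (i ` {1..n})"
      unfolding G_def infsum_pinned_terms[OF i] card_incr_seqs_image[OF i] ..
  qed
  also have "\<dots> = (\<Sum>n=0..N. \<Sum>A\<in>{A \<in> Pow {1..N}. card A = n}. G A)"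
    by (intro sum.cong refl sum.reindex_bij_betw bij_betw_incr_seqs_subsets)
  also have "\<dots> = (\<Sum>A\<in>Pow {1..N}. G A)"
    by (rule sum.group) (auto dest: card_mono[OF finite_atLeastAtMost])
  finally show ?thesis
    unfolding integral_Q_K_squared G_def ..
qed

end
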